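(* In the setting described in the context, suppose $C_1$ is sufficiently large compared with $C_{\mathsf{cover}}$ (i.e., $C_1\gg C_{\mathsf{cover}}$). Then for each $1\le t\le T$, \[ \mathbb{P}\big((X_t,X_{t-1})\notin\mathcal A_t\big)\le\exp\Big(-\frac{C_1}{4}k\log T\Big). \]
   Context: Let $d\ge1$, $T\ge2$ be integers. Learning rates: $\beta_1=T^{-c_0}$, $\beta_{t+1}=\frac{c_1\log T}{T}\min\{\beta_1(1+\frac{c_1\log T}{T})^t,1\}$ ($t=1,\dots,T-1$), with $c_0,c_1>0$ sufficiently large universal constants; $\alpha_t=1-\beta_t$, $\bar\alpha_t=\prod_{i=1}^t\alpha_i$. Forward process: $X_0\sim p_{\mathsf{data}}$ on $\mathbb{R}^d$, $X_t=\sqrt{\alpha_t}X_{t-1}+\sqrt{1-\alpha_t}W_t$ ($t=1,\dots,T$), $W_t$ i.i.d. $\mathcal N(0,I_d)$ independent of $X_0$. Data assumptions: $\mathcal X$ is the support of $p_{\mathsf{data}}$; $\varepsilon=T^{-c_\varepsilon}$ with $c_\varepsilon$ a sufficiently large universal constant; $N_\varepsilon=N_\varepsilon(\mathcal X)$ is the minimal cardinality of an $\varepsilon$-net of $\mathcal X$ (a subset of $\mathcal X$ within distance $\varepsilon$ of every point of $\mathcal X$); $k>0$ satisfies $\log N_\varepsilon\le C_{\mathsf{cover}}k\log T$ for a constant $C_{\mathsf{cover}}>0$; $\sup_{x\in\mathcal X}\|x\|_2\le T^{c_R}$ for a universal constant $c_R>0$. Typical sets: let $\{x_i^\star\}_{1\le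 i\le N_\varepsilon}$ be an $\varepsilon$-net of $\mathcal X$ and $\{\mathcal B_i\}_{1\le i\le N_\varepsilon}$ pairwise disjoint sets covering $\mathcal X$ with $x_i^\star\in\mathcal B_i$ and $\mathcal B_i$ contained in the closed ball of radius $\varepsilon$ around $x_i^\star$. Let $C_1>0$ be a universal constant. Define $\mathcal I=\{i:\mathbb P(X_0\in\mathcal B_i)\ge\exp(-C_1k\log T)\}$; $\mathcal G=\{\omega\in\mathbb{R}^d:\|\omega\|_2\le2\sqrt d+\sqrt{C_1k\log T}$ and $|(x_i^\star-x_j^\star)^\top\omega|\le\sqrt{C_1k\log T}\,\|x_i^\star-x_j^\star\|_2$ for all $1\le i,j\le N_\varepsilon\}$; $\mathcal T_t=\{\sqrt{\bar\alpha_t}x_0+\sqrt{1-\bar\alpha_t}\,\omega:x_0\in\cup_{i\in\mathcal I}\mathcal B_i,\ \omega\in\mathcal G\}$; $\mathcal A_t=\{(x_t,x_{t-1})\in\mathbb{R}^d\times\mathbb{R}^d:x_t\in\mathcal T_t,\ (x_t-\sqrt{\alpha_t}x_{t-1})/\sqrt{1-\alpha_t}\in\mathcal G\}$. *)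

theory Defs
  imports "HOL-Probability.Probability"
begin

text \<open>Vectors of R^d are represented as extensional functions on {..<d}
  (elements of PiE {..<d} (\<lambda>_. UNIV)), so that the dimension d is an ordinary
  natural number and the universal constants can be quantified uniformly in d.\<close>

definition Rd :: "nat \<Rightarrow> (nat \<Rightarrow> real) measure" where
  "Rd d = PiM {..<d} (\<lambda>_. (borel :: real measure))"

definition vnorm :: "nat \<Rightarrow> (nat \<Rightarrow> real) \<Rightarrow> real" where
  "vnorm d x = sqrt (\<Sum>i<d. (x i)\<^sup>2)"

definition vinner :: "nat \<Rightarrow> (nat \<Rightarrow> real) \<Rightarrow> (nat \<Rightarrow> real) \<Rightarrow> real" where
  "vinner d x y = (\<Sum>i<d. x i * y i)"

definition vdist :: "nat \<Rightarrow> (nat \<Rightarrow> real) \<Rightarrow> (nat \<Rightarrow> real) \<Rightarrow> real" where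
  "vdist d x y = vnorm d (\<lambda>i. x i - y i)"

definition vlin :: "nat \<Rightarrow> real \<Rightarrow> (nat \<Rightarrow> real) \<Rightarrow> real \<Rightarrow> (nat \<Rightarrow> real) \<Rightarrow> (nat \<Rightarrow> real)" where
  "vlin d a x b y = (\<lambda>i\<in>{..<d}. a * x i + b * y i)"

definition std_gauss :: "nat \<Rightarrow> (nat \<Rightarrow> real) measure" where
  "std_gauss d = PiM {..<d} (\<lambda>_. density lborel (\<lambda>x. ennreal (std_normal_density x)))"

definition support_of :: "nat \<Rightarrow> (nat \<Rightarrow> real) measure \<Rightarrow> (nat \<Rightarrow> real) set" where
  "support_of d \<mu> = {x \<in> space (Rd d). \<forall>e>0. emeasure \<mu> {y \<in> space (Rd d). vdist d x y < e} > 0}"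

definition is_eps_net :: "nat \<Rightarrow> (nat \<Rightarrow> real) set \<Rightarrow> (nat \<Rightarrow> real) set \<Rightarrow> real \<Rightarrow> bool" where
  "is_eps_net d S A eps = (finite A \<and> A \<subseteq> S \<and> (\<forall>x\<in>S. \<exists>y\<in>A. vdist d x y \<le> eps))"

definition covering_number :: "nat \<Rightarrow> (nat \<Rightarrow> real) set \<Rightarrow> real \<Rightarrow> nat" where
  "covering_number d S eps = (LEAST n. \<exists>A. is_eps_net d S A eps \<and> card A = n)"

definition beta :: "real \<Rightarrow> real \<Rightarrow> nat \<Rightarrow> nat \<Rightarrow> real" where
  "beta c0 c1 T t =
     (if t \<le> 1 then real T powr (-c0)
      else c1 * ln (real T) / real T *
           min (real T powr (-c0) * (1 + c1 * ln (real T) / real T) ^ (t - 1)) 1)"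

definition alpha :: "real \<Rightarrow> real \<Rightarrow> nat \<Rightarrow> nat \<Rightarrow> real" where
  "alpha c0 c1 T t = 1 - beta c0 c1 T t"

definition alphabar :: "real \<Rightarrow> real \<Rightarrow> nat \<Rightarrow> nat \<Rightarrow> real" where
  "alphabar c0 c1 T t = (\<Prod>i\<in>{1..t}. alpha c0 c1 T i)"

text \<open>Canonical probability space of the forward process: omega 0 = X_0 ~ p_data,
  omega i = W_i ~ N(0,I_d) (i = 1..T), all independent.\<close>
definition fwd_space :: "(nat \<Rightarrow> real) measure \<Rightarrow> nat \<Rightarrow> nat \<Rightarrow> (nat \<Rightarrow> nat \<Rightarrow> real) measure" where
  "fwd_space p d T = PiM {0..T} (\<lambda>i. if i = 0 then p else std_gauss d)"

primrec fwdX :: "real \<Rightarrow> real \<Rightarrow> nat \<Rightarrow> nat \<Rightarrow> (nat \<Rightarrow> nat \<Rightarrow> real) \<Rightarrow> nat \<Rightarrow> (nat \<Rightarrow> real)" where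
  "fwdX c0 c1 T d \<omega> 0 = \<omega> 0"
| "fwdX c0 c1 T d \<omega> (Suc t) =
     vlin d (sqrt (alpha c0 c1 T (Suc t))) (fwdX c0 c1 T d \<omega> t)
            (sqrt (1 - alpha c0 c1 T (Suc t))) (\<omega> (Suc t))"

text \<open>The set G (r = sqrt (C1 k log T)), with net points xs 1, ..., xs N\<close>
definition Gset :: "nat \<Rightarrow> nat \<Rightarrow> (nat \<Rightarrow> nat \<Rightarrow> real) \<Rightarrow> real \<Rightarrow> (nat \<Rightarrow> real) set" where
  "Gset d N xs r = {w \<in> space (Rd d). vnorm d w \<le> 2 * sqrt (real d) + r \<and>
     (\<forall>i\<in>{1..N}. \<forall>j\<in>{1..N}.
        \<bar>vinner d (\<lambda>l. xs i l - xs j l) w\<bar> \<le> r * vdist d (xs i) (xs j))}"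

text \<open>T_t given U = union of B_i over i in I, abar = alphabar_t\<close>
definition Tset :: "nat \<Rightarrow> real \<Rightarrow> (nat \<Rightarrow> real) set \<Rightarrow> (nat \<Rightarrow> real) set \<Rightarrow> (nat \<Rightarrow> real) set" where
  "Tset d abar U G = {vlin d (sqrt abar) x0 (sqrt (1 - abar)) w | x0 w. x0 \<in> U \<and> w \<in> G}"

definition Aset :: "nat \<Rightarrow> real \<Rightarrow> (nat \<Rightarrow> real) set \<Rightarrow> (nat \<Rightarrow> real) set
                     \<Rightarrow> ((nat \<Rightarrow> real) \<times> (nat \<Rightarrow> real)) set" where
  "Aset d a TT G = {(xt, xp). xt \<in> TT \<and>
      vlin d (1 / sqrt (1 - a)) xt (- sqrt a / sqrt (1 - a)) xp \<in> G}"

end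

(* Unrolling the recursion, X_t = sqrt(abar_t) X_0 + sqrt(1 - abar_t) V_t, where V_t is a
   combination of W_1, ..., W_t with unit sum of squared weights, hence again standard Gaussian.
   If X_0 lies in a heavy cell (one of mass at least T^(-C1 k)) and both V_t and
   W_t = (X_t - sqrt(alpha_t) X_(t-1)) / sqrt(1 - alpha_t) lie in G, then (X_t, X_(t-1)) lies
   in A_t. The light cells carry mass at most N T^(-C1 k). A unit combination of the noises
   leaves G with probability at most 2^d exp(-3/8 (2 sqrt d + r)^2) + N^2 2 exp(-r^2/2), by
   Chernoff bounds, computed from exact Gaussian moment generating functions, for its squared
   norm and for its projection on each difference x_i - x_j. With r^2 = C1 k log T and
   log N <= C_cover k log T <= r^2 / 32 the three contributions add up to at most
   T^(-C1 k / 4). *)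

theory Submission
  imports Defs
begin

section \<open>Moment generating functions of Gaussians\<close>

abbreviation std_normal :: "real measure" where
  "std_normal \<equiv> density lborel (\<lambda>x. ennreal (std_normal_density x))"

lemma nn_integral_normal_density:
  "\<sigma> > 0 \<Longrightarrow> (\<integral>\<^sup>+x. ennreal (normal_density \<mu> \<sigma> x) \<partial>lborel) = 1"
  by (subst nn_integral_eq_integral) (auto simp: integrable_normal_density)

lemma nn_integral_std_normal_exp_linear:
  "(\<integral>\<^sup>+x. ennreal (exp (a * x)) \<partial>std_normal) = ennreal (exp (a\<^sup>2 / 2))"
proof -
  have shift: "std_normal_density x * exp (a * x) = exp (a\<^sup>2 / 2) * normal_density a 1 x" for x
  proof -
    have "-(x\<^sup>2) / 2 + a * x = a\<^sup>2 / 2 + (- (x - a)\<^sup>2 / (2 * 1\<^sup>2))"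
      by (simp add: power2_eq_square field_simps)
    then show ?thesis
      unfolding normal_density_def by (simp add: mult_exp_exp)
  qed
  have "(\<integral>\<^sup>+x. ennreal (exp (a * x)) \<partial>std_normal)
      = (\<integral>\<^sup>+x. ennreal (std_normal_density x) * ennreal (exp (a * x)) \<partial>lborel)"
    by (rule nn_integral_density) auto
  also have "\<dots> = (\<integral>\<^sup>+x. ennreal (exp (a\<^sup>2 / 2)) * ennreal (normal_density a 1 x) \<partial>lborel)"
    by (simp add: shift flip: ennreal_mult)
  also have "\<dots> = ennreal (exp (a\<^sup>2 / 2)) * (\<integral>\<^sup>+x. ennreal (normal_density a 1 x) \<partial>lborel)"
    by (rule nn_integral_cmult) auto
  finally show ?thesis by (simp add: nn_integral_normal_density)
qed

lemma nn_integral_std_normal_exp_square: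
  assumes "0 \<le> l" "l < 1/2"
  shows "(\<integral>\<^sup>+x. ennreal (exp (l * x\<^sup>2)) \<partial>std_normal) = ennreal (1 / sqrt (1 - 2 * l))"
proof -
  define \<sigma> where "\<sigma> = 1 / sqrt (1 - 2 * l)"
  have \<sigma>: "\<sigma> > 0" "\<sigma>\<^sup>2 = 1 / (1 - 2 * l)"
    using assms by (auto simp: \<sigma>_def power_divide)
  have rescale: "std_normal_density x * exp (l * x\<^sup>2) = \<sigma> * normal_density 0 \<sigma> x" for x
  proof -
    have "- (x - 0)\<^sup>2 / (2 * \<sigma>\<^sup>2) = - x\<^sup>2 * ((1 - 2 * l) / 2)"
      using \<sigma> assms by simp
    then have "-(x\<^sup>2) / 2 + l * x\<^sup>2 = - (x - 0)\<^sup>2 / (2 * \<sigma>\<^sup>2)"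
      by (simp add: algebra_simps)
    moreover have "1 / sqrt (2 * pi * \<sigma>\<^sup>2) = 1 / sqrt (2 * pi) / \<sigma>"
      using \<sigma>(1) by (simp add: real_sqrt_mult)
    ultimately show ?thesis
      unfolding normal_density_def using \<sigma>(1) by (simp add: mult_exp_exp field_simps)
  qed
  have "(\<integral>\<^sup>+x. ennreal (exp (l * x\<^sup>2)) \<partial>std_normal)
      = (\<integral>\<^sup>+x. ennreal (std_normal_density x) * ennreal (exp (l * x\<^sup>2)) \<partial>lborel)"
    by (rule nn_integral_density) auto
  also have "\<dots> = (\<integral>\<^sup>+x. ennreal \<sigma> * ennreal (normal_density 0 \<sigma> x) \<partial>lborel)"
    using \<sigma>(1) by (simp add: rescale flip: ennreal_mult)
  also have "\<dots> = ennreal \<sigma> * (\<integral>\<^sup>+x. ennreal (normal_density 0 \<sigma> x) \<partial>lborel)"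
    by (rule nn_integral_cmult) auto
  finally show ?thesis using \<sigma>(1) by (simp add: nn_integral_normal_density \<sigma>_def)
qed

lemma prob_space_std_normal: "prob_space std_normal"
  using prob_space_normal_density[of 1 0] by simp

lemma sets_std_normal [measurable_cong]: "sets std_normal = sets borel"
  by simp

lemma prob_space_std_gauss: "prob_space (std_gauss d)"
  unfolding std_gauss_def by (rule prob_space_PiM) (rule prob_space_std_normal)

lemma nn_integral_std_gauss_exp_inner:
  "(\<integral>\<^sup>+w. ennreal (exp (\<Sum>l<d. u l * w l)) \<partial>std_gauss d)
     = ennreal (exp ((\<Sum>l<d. (u l)\<^sup>2) / 2))"
proof -
  interpret product_sigma_finite "\<lambda>_. std_normal"
    unfolding product_sigma_finite_def
    using prob_space_imp_sigma_finite[OF prob_space_std_normal] by simp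
  have "(\<integral>\<^sup>+w. ennreal (exp (\<Sum>l<d. u l * w l)) \<partial>std_gauss d)
      = (\<integral>\<^sup>+w. (\<Prod>l<d. (\<lambda>l x. ennreal (exp (u l * x))) l (w l)) \<partial>std_gauss d)"
    by (simp add: exp_sum prod_ennreal[symmetric])
  also have "\<dots> = (\<Prod>l<d. \<integral>\<^sup>+x. ennreal (exp (u l * x)) \<partial>std_normal)"
    unfolding std_gauss_def by (rule product_nn_integral_prod) auto
  also have "\<dots> = ennreal (exp ((\<Sum>l<d. (u l)\<^sup>2) / 2))"
    by (simp add: nn_integral_std_normal_exp_linear exp_sum prod_ennreal[symmetric]
        sum_divide_distrib)
  finally show ?thesis .
qed

lemma nn_integral_std_gauss_exp_norm_sq:
  assumes "0 \<le> l" "l < 1/2"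
  shows "(\<integral>\<^sup>+w. ennreal (exp (l * (\<Sum>i<d. (w i)\<^sup>2))) \<partial>std_gauss d)
           = ennreal ((1 / sqrt (1 - 2 * l)) ^ d)"
proof -
  interpret product_sigma_finite "\<lambda>_. std_normal"
    unfolding product_sigma_finite_def
    using prob_space_imp_sigma_finite[OF prob_space_std_normal] by simp
  have "(\<integral>\<^sup>+w. ennreal (exp (l * (\<Sum>i<d. (w i)\<^sup>2))) \<partial>std_gauss d)
      = (\<integral>\<^sup>+w. (\<Prod>i<d. (\<lambda>i x. ennreal (exp (l * x\<^sup>2))) i (w i)) \<partial>std_gauss d)"
    by (simp add: exp_sum prod_ennreal[symmetric] sum_distrib_left)
  also have "\<dots> = (\<Prod>i<d. \<integral>\<^sup>+x. ennreal (exp (l * x\<^sup>2)) \<partial>std_normal)"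
    unfolding std_gauss_def by (rule product_nn_integral_prod) auto
  also have "\<dots> = ennreal ((1 / sqrt (1 - 2 * l)) ^ d)"
    using assms by (simp add: nn_integral_std_normal_exp_square prod_ennreal[symmetric] ennreal_power)
  finally show ?thesis .
qed

lemma space_Rd: "space (Rd d) = PiE {..<d} (\<lambda>_. UNIV)"
  unfolding Rd_def by (simp add: space_PiM)

lemma sets_std_gauss: "sets (std_gauss d) = sets (Rd d)"
  unfolding std_gauss_def Rd_def by (intro sets_PiM_cong) auto

lemma space_std_gauss: "space (std_gauss d) = space (Rd d)"
  using sets_std_gauss by (rule sets_eq_imp_space_eq)

lemma measurable_std_gauss_component: "(\<lambda>w. w l) \<in> borel_measurable (std_gauss d)"
proof (cases "l < d")
  case True
  then have "(\<lambda>w. w l) \<in> measurable (PiM {..<d} (\<lambda>_. std_normal)) std_normal"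
    by (intro measurable_component_singleton) auto
  then show ?thesis
    unfolding std_gauss_def by (simp add: measurable_cong_sets[OF refl sets_std_normal])
next
  case False
  then have "w l = undefined" if "w \<in> space (std_gauss d)" for w
    using that by (auto simp: space_std_gauss space_Rd PiE_iff extensional_def)
  then show ?thesis
    by (subst measurable_cong[where g = "\<lambda>_. undefined"]) auto
qed

lemma prob_space_fwd_space: "prob_space p \<Longrightarrow> prob_space (fwd_space p d T)"
  unfolding fwd_space_def by (rule prob_space_PiM) (auto simp: prob_space_std_gauss)

lemma measurable_fwd_space_component:
  "s \<in> {0..T} \<Longrightarrow>
    (\<lambda>\<omega>. \<omega> s) \<in> measurable (fwd_space p d T) (if s = 0 then p else std_gauss d)"
  unfolding fwd_space_def by (rule measurable_component_singleton)

lemma fwd_space_component_in_space: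
  assumes "\<omega> \<in> space (fwd_space p d T)" "s \<in> {0..T}"
  shows "\<omega> s \<in> space (if s = 0 then p else std_gauss d)"
  using measurable_space[OF measurable_fwd_space_component[OF assms(2)] assms(1)] .

lemma measurable_fwd_space_noise:
  assumes "s \<in> {1..T}"
  shows "(\<lambda>\<omega>. \<omega> s l) \<in> borel_measurable (fwd_space p d T)"
proof -
  have "(\<lambda>\<omega>. \<omega> s) \<in> measurable (fwd_space p d T) (std_gauss d)"
    using measurable_fwd_space_component[of s T p d] assms by simp
  from measurable_comp[OF this measurable_std_gauss_component] show ?thesis
    by (simp add: comp_def)
qed

text \<open>The components \<open>\<omega> 1, \<dots>, \<omega> T\<close> of a sample point are the noises \<open>W\<^sub>1, \<dots>, W\<^sub>T\<close>;
  \<open>noise_comb T b \<omega> l\<close> is coordinate \<open>l\<close> of \<open>\<Sum>\<^sub>s b\<^sub>s W\<^sub>s\<close>.\<close>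

definition noise_comb :: "nat \<Rightarrow> (nat \<Rightarrow> real) \<Rightarrow> (nat \<Rightarrow> nat \<Rightarrow> real) \<Rightarrow> nat \<Rightarrow> real" where
  "noise_comb T b \<omega> l = (\<Sum>s\<in>{1..T}. b s * \<omega> s l)"

lemma measurable_noise_comb [measurable]:
  "(\<lambda>\<omega>. noise_comb T b \<omega> l) \<in> borel_measurable (fwd_space p d T)"
  unfolding noise_comb_def
  by (intro borel_measurable_sum borel_measurable_times measurable_fwd_space_noise) auto

lemma nn_integral_fwd_space_exp_inner_noise_comb:
  assumes p: "prob_space p"
  shows "(\<integral>\<^sup>+\<omega>. ennreal (exp (\<Sum>l<d. u l * noise_comb T b \<omega> l)) \<partial>fwd_space p d T)
       = ennreal (exp ((\<Sum>s\<in>{1..T}. (b s)\<^sup>2) * (\<Sum>l<d. (u l)\<^sup>2) / 2))"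
proof -
  define M where "M = (\<lambda>i::nat. if i = 0 then p else std_gauss d)"
  interpret product_sigma_finite M
    unfolding product_sigma_finite_def M_def
    using prob_space_imp_sigma_finite[OF p] prob_space_imp_sigma_finite[OF prob_space_std_gauss]
    by simp
  define g where "g = (\<lambda>s (w::nat \<Rightarrow> real).
    if s = 0 then (1::ennreal) else ennreal (exp (\<Sum>l<d. (b s * u l) * w l)))"
  have 0: "{0..T} = insert 0 {1..T}" by auto
  have factor: "ennreal (exp (\<Sum>l<d. u l * noise_comb T b \<omega> l)) = (\<Prod>s\<in>{0..T}. g s (\<omega> s))" for \<omega>
  proof -
    have "(\<Sum>l<d. u l * noise_comb T b \<omega> l) = (\<Sum>s\<in>{1..T}. \<Sum>l<d. (b s * u l) * \<omega> s l)"
      unfolding noise_comb_def by (simp add: sum_distrib_left algebra_simps) (rule sum.swap)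
    then show ?thesis
      by (simp add: 0 exp_sum g_def prod_ennreal prod_nonneg)
  qed
  have "(\<integral>\<^sup>+\<omega>. ennreal (exp (\<Sum>l<d. u l * noise_comb T b \<omega> l)) \<partial>fwd_space p d T)
      = (\<integral>\<^sup>+\<omega>. (\<Prod>s\<in>{0..T}. g s (\<omega> s)) \<partial>Pi\<^sub>M {0..T} M)"
    unfolding factor fwd_space_def M_def ..
  also have "\<dots> = (\<Prod>s\<in>{0..T}. integral\<^sup>N (M s) (g s))"
  proof (rule product_nn_integral_prod)
    show "g s \<in> borel_measurable (M s)" for s
      by (cases "s = 0") (auto simp: g_def M_def std_gauss_def)
  qed auto
  also have "\<dots> = (\<Prod>s\<in>{1..T}. ennreal (exp ((\<Sum>l<d. (b s * u l)\<^sup>2) / 2)))"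
    using prob_space.emeasure_space_1[OF p]
    by (simp add: 0 M_def g_def nn_integral_std_gauss_exp_inner)
  also have "\<dots> = ennreal (exp ((\<Sum>s\<in>{1..T}. (b s)\<^sup>2) * (\<Sum>l<d. (u l)\<^sup>2) / 2))"
    by (simp add: prod_ennreal exp_sum[symmetric] sum_divide_distrib[symmetric] sum_distrib_left
          sum_distrib_right power_mult_distrib) (rule sum.swap)
  finally show ?thesis .
qed

text \<open>Averaging over an independent standard Gaussian \<open>z\<close> linearises the exponent,
  \<open>exp (l |Y|\<^sup>2) = E\<^sub>z exp (sqrt (2 l) z \<bullet> Y)\<close>; after Fubini the inner expectation over \<open>\<omega>\<close>
  is a linear MGF, which leaves the MGF of \<open>|z|\<^sup>2\<close>.\<close>

lemma nn_integral_fwd_space_exp_norm_sq_noise_comb: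
  assumes p: "prob_space p" and b: "(\<Sum>s\<in>{1..T}. (b s)\<^sup>2) = 1" and l: "0 \<le> l" "l < 1/2"
  shows "(\<integral>\<^sup>+\<omega>. ennreal (exp (l * (\<Sum>i<d. (noise_comb T b \<omega> i)\<^sup>2))) \<partial>fwd_space p d T)
       = ennreal ((1 / sqrt (1 - 2 * l)) ^ d)"
proof -
  let ?O = "fwd_space p d T" and ?G = "std_gauss d"
  let ?F = "\<lambda>\<omega> z. ennreal (exp (\<Sum>i<d. (sqrt (2 * l) * z i) * noise_comb T b \<omega> i))"
  interpret pair_sigma_finite ?O ?G
    unfolding pair_sigma_finite_def
    using prob_space_imp_sigma_finite[OF prob_space_fwd_space[OF p]]
      prob_space_imp_sigma_finite[OF prob_space_std_gauss] by simp
  have average: "ennreal (exp (l * (\<Sum>i<d. (noise_comb T b \<omega> i)\<^sup>2))) = (\<integral>\<^sup>+z. ?F \<omega> z \<partial>?G)"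
    for \<omega>
  proof -
    have "(\<integral>\<^sup>+z. ?F \<omega> z \<partial>?G)
        = (\<integral>\<^sup>+z. ennreal (exp (\<Sum>i<d. (sqrt (2 * l) * noise_comb T b \<omega> i) * z i)) \<partial>?G)"
      by (simp add: algebra_simps)
    also have "\<dots> = ennreal (exp ((\<Sum>i<d. (sqrt (2 * l) * noise_comb T b \<omega> i)\<^sup>2) / 2))"
      by (rule nn_integral_std_gauss_exp_inner)
    finally show ?thesis
      using l by (simp add: power_mult_distrib sum_distrib_left[symmetric])
  qed
  have "case_prod ?F \<in> borel_measurable (?O \<Otimes>\<^sub>M ?G)"
    using measurable_std_gauss_component[of _ d] by (simp add: case_prod_beta') measurable
  then have "(\<integral>\<^sup>+\<omega>. (\<integral>\<^sup>+z. ?F \<omega> z \<partial>?G) \<partial>?O) = (\<integral>\<^sup>+z. (\<integral>\<^sup>+\<omega>. ?F \<omega> z \<partial>?O) \<partial>?G)"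
    by (rule Fubini'[symmetric])
  also have "\<dots> = (\<integral>\<^sup>+z. ennreal (exp (l * (\<Sum>i<d. (z i)\<^sup>2))) \<partial>?G)"
    using l b
    by (intro nn_integral_cong)
      (simp add: nn_integral_fwd_space_exp_inner_noise_comb[OF p] power_mult_distrib
        sum_distrib_left[symmetric])
  also have "\<dots> = ennreal ((1 / sqrt (1 - 2 * l)) ^ d)"
    by (rule nn_integral_std_gauss_exp_norm_sq[OF l])
  finally show ?thesis
    by (simp only: average)
qed

lemma emeasure_fwd_space_initial:
  assumes p: "prob_space p" and A: "A \<in> sets p"
  shows "emeasure (fwd_space p d T) {\<omega> \<in> space (fwd_space p d T). \<omega> 0 \<in> A} = emeasure p A"
proof -
  define M where "M = (\<lambda>i::nat. if i = 0 then p else std_gauss d)"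
  interpret product_sigma_finite M
    unfolding product_sigma_finite_def M_def
    using prob_space_imp_sigma_finite[OF p] prob_space_imp_sigma_finite[OF prob_space_std_gauss]
    by simp
  define X where "X = (\<lambda>i::nat. if i = 0 then A else space (M i))"
  have "{\<omega> \<in> space (fwd_space p d T). \<omega> 0 \<in> A} = PiE {0..T} X"
    using sets.sets_into_space[OF A]
    by (auto simp: fwd_space_def space_PiM M_def X_def PiE_def Pi_def)
  moreover have "emeasure (fwd_space p d T) (PiE {0..T} X) = (\<Prod>i\<in>{0..T}. emeasure (M i) (X i))"
    unfolding fwd_space_def M_def[symmetric] by (rule emeasure_PiM) (auto simp: X_def M_def A)
  moreover have "{0..T} = insert 0 {1..T}" by auto
  ultimately show ?thesis
    using prob_space.emeasure_space_1[OF prob_space_std_gauss] by (simp add: X_def M_def)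
qed

section \<open>Gaussian tail bounds\<close>

lemma Chernoff_ineq_nn_integral_space:
  assumes "s > 0" "f \<in> borel_measurable M"
  shows "emeasure M {x \<in> space M. a \<le> f x}
           \<le> ennreal (exp (- s * a)) * (\<integral>\<^sup>+x. ennreal (exp (s * f x)) \<partial>M)"
proof -
  have "(\<integral>\<^sup>+x. ennreal (exp (s * f x)) * indicator (space M) x \<partial>M)
      = (\<integral>\<^sup>+x. ennreal (exp (s * f x)) \<partial>M)"
    by (rule nn_integral_cong) simp
  with Chernoff_ineq_nn_integral_ge[of s "space M" M f a] assms show ?thesis
    by simp
qed

lemma noise_comb_norm_tail:
  assumes p: "prob_space p" and b: "(\<Sum>s\<in>{1..T}. (b s)\<^sup>2) = 1"
    and l: "0 < l" "l < 1/2" and R: "0 \<le> R"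
  shows "emeasure (fwd_space p d T)
           {\<omega> \<in> space (fwd_space p d T). R < sqrt (\<Sum>i<d. (noise_comb T b \<omega> i)\<^sup>2)}
         \<le> ennreal (exp (- l * R\<^sup>2) * (1 / sqrt (1 - 2 * l)) ^ d)"
proof -
  let ?O = "fwd_space p d T" and ?S = "\<lambda>\<omega>. \<Sum>i<d. (noise_comb T b \<omega> i)\<^sup>2"
  have "{\<omega> \<in> space ?O. R < sqrt (?S \<omega>)} \<subseteq> {\<omega> \<in> space ?O. R\<^sup>2 \<le> ?S \<omega>}"
  proof safe
    fix \<omega> assume "R < sqrt (?S \<omega>)"
    then have "R\<^sup>2 \<le> (sqrt (?S \<omega>))\<^sup>2"
      using R by (intro power_mono) auto
    then show "R\<^sup>2 \<le> ?S \<omega>"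
      by (simp add: sum_nonneg)
  qed
  then have "emeasure ?O {\<omega> \<in> space ?O. R < sqrt (?S \<omega>)} \<le> emeasure ?O {\<omega> \<in> space ?O. R\<^sup>2 \<le> ?S \<omega>}"
    by (rule emeasure_mono) measurable
  also have "\<dots> \<le> ennreal (exp (- l * R\<^sup>2)) * (\<integral>\<^sup>+\<omega>. ennreal (exp (l * ?S \<omega>)) \<partial>?O)"
    using l by (intro Chernoff_ineq_nn_integral_space) auto
  also have "\<dots> = ennreal (exp (- l * R\<^sup>2) * (1 / sqrt (1 - 2 * l)) ^ d)"
    using l by (simp add: nn_integral_fwd_space_exp_norm_sq_noise_comb[OF p b] ennreal_mult)
  finally show ?thesis .
qed

lemma noise_comb_inner_upper_tail:
  assumes p: "prob_space p" and b: "(\<Sum>s\<in>{1..T}. (b s)\<^sup>2) = 1"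
    and r: "0 < r" and u: "0 < (\<Sum>l<d. (u l)\<^sup>2)"
  shows "emeasure (fwd_space p d T)
           {\<omega> \<in> space (fwd_space p d T). r * sqrt (\<Sum>l<d. (u l)\<^sup>2) \<le> (\<Sum>l<d. u l * noise_comb T b \<omega> l)}
         \<le> ennreal (exp (- r\<^sup>2 / 2))"
proof -
  let ?O = "fwd_space p d T"
  define \<nu> where "\<nu> = sqrt (\<Sum>l<d. (u l)\<^sup>2)"
  define s where "s = r / \<nu>"
  have \<nu>: "\<nu> > 0" "\<nu>\<^sup>2 = (\<Sum>l<d. (u l)\<^sup>2)"
    using u by (auto simp: \<nu>_def)
  have s: "s > 0" "s * \<nu> = r"
    using \<nu> r by (auto simp: s_def)
  have "emeasure ?O {\<omega> \<in> space ?O. r * \<nu> \<le> (\<Sum>l<d. u l * noise_comb T b \<omega> l)}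
      \<le> ennreal (exp (- s * (r * \<nu>)))
          * (\<integral>\<^sup>+\<omega>. ennreal (exp (\<Sum>l<d. (s * u l) * noise_comb T b \<omega> l)) \<partial>?O)"
    using Chernoff_ineq_nn_integral_space[OF s(1), of "\<lambda>\<omega>. \<Sum>l<d. u l * noise_comb T b \<omega> l" ?O]
    by (simp add: sum_distrib_left mult.assoc)
  also have "\<dots> = ennreal (exp (- r\<^sup>2)) * ennreal (exp (r\<^sup>2 / 2))"
  proof -
    have "(\<Sum>l<d. (s * u l)\<^sup>2) = s\<^sup>2 * \<nu>\<^sup>2"
      using \<nu>(2) by (simp add: power_mult_distrib sum_distrib_left)
    also have "\<dots> = r\<^sup>2"
      using s(2) by (simp flip: power_mult_distrib)
    moreover have "s * (r * \<nu>) = r\<^sup>2"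
      using s(2) by (metis mult.left_commute power2_eq_square)
    ultimately show ?thesis
      by (simp only: nn_integral_fwd_space_exp_inner_noise_comb[OF p] b) simp
  qed
  also have "\<dots> = ennreal (exp (- r\<^sup>2 / 2))"
    by (simp add: mult_exp_exp flip: ennreal_mult)
  finally show ?thesis
    by (simp add: \<nu>_def)
qed

lemma noise_comb_inner_tail:
  assumes p: "prob_space p" and b: "(\<Sum>s\<in>{1..T}. (b s)\<^sup>2) = 1" and r: "0 < r"
  shows "emeasure (fwd_space p d T)
           {\<omega> \<in> space (fwd_space p d T). r * sqrt (\<Sum>l<d. (u l)\<^sup>2) < \<bar>\<Sum>l<d. u l * noise_comb T b \<omega> l\<bar>}
         \<le> ennreal (2 * exp (- r\<^sup>2 / 2))"
proof (cases "(\<Sum>l<d. (u l)\<^sup>2) = 0")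
  case True
  then have "\<forall>l<d. u l = 0"
    by (subst (asm) sum_nonneg_eq_0_iff) auto
  then show ?thesis
    by simp
next
  case False
  let ?O = "fwd_space p d T"
  let ?tail = "\<lambda>v. {\<omega> \<in> space ?O. r * sqrt (\<Sum>l<d. (v l)\<^sup>2) \<le> (\<Sum>l<d. v l * noise_comb T b \<omega> l)}"
  have u: "0 < (\<Sum>l<d. (u l)\<^sup>2)" "0 < (\<Sum>l<d. (- u l)\<^sup>2)"
    using False by (simp_all add: order.not_eq_order_implies_strict sum_nonneg)
  have "{\<omega> \<in> space ?O. r * sqrt (\<Sum>l<d. (u l)\<^sup>2) < \<bar>\<Sum>l<d. u l * noise_comb T b \<omega> l\<bar>}
      \<subseteq> ?tail u \<union> ?tail (\<lambda>l. - u l)"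
    by (auto simp: abs_less_iff sum_negf)
  then have "emeasure ?O {\<omega> \<in> space ?O. r * sqrt (\<Sum>l<d. (u l)\<^sup>2) < \<bar>\<Sum>l<d. u l * noise_comb T b \<omega> l\<bar>}
      \<le> emeasure ?O (?tail u \<union> ?tail (\<lambda>l. - u l))"
    by (rule emeasure_mono) measurable
  also have "\<dots> \<le> emeasure ?O (?tail u) + emeasure ?O (?tail (\<lambda>l. - u l))"
    by (rule emeasure_subadditive) measurable
  also have "\<dots> \<le> ennreal (exp (- r\<^sup>2 / 2)) + ennreal (exp (- r\<^sup>2 / 2))"
    by (intro add_mono noise_comb_inner_upper_tail[OF p b r] u)
  finally show ?thesis
    by (simp flip: ennreal_plus)
qed

definition offdiag :: "nat \<Rightarrow> (nat \<times> nat) set" where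
  "offdiag N = {(i, j). i \<in> {1..N} \<and> j \<in> {1..N} \<and> i \<noteq> j}"

lemma finite_offdiag: "finite (offdiag N)"
  by (rule finite_subset[of _ "{1..N} \<times> {1..N}"]) (auto simp: offdiag_def)

lemma card_offdiag_le: "card (offdiag N) \<le> N * N"
proof -
  have "card (offdiag N) \<le> card ({1..N} \<times> {1..N})"
    unfolding offdiag_def by (intro card_mono) auto
  then show ?thesis
    by simp
qed

lemma offdiag_eq_empty: "N \<le> 1 \<Longrightarrow> offdiag N = {}"
  by (auto simp: offdiag_def)

lemma notin_GsetD:
  assumes "w \<in> space (Rd d)" "w \<notin> Gset d N xs r"
  shows "2 * sqrt (real d) + r < vnorm d w \<or>
    (\<exists>(i, j)\<in>offdiag N. r * vdist d (xs i) (xs j) < \<bar>vinner d (\<lambda>l. xs i l - xs j l) w\<bar>)"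
proof -
  have diagonal: "\<bar>vinner d (\<lambda>l. xs i l - xs i l) w\<bar> \<le> r * vdist d (xs i) (xs i)" for i
    by (simp add: vinner_def vdist_def vnorm_def)
  from assms have "\<not> vnorm d w \<le> 2 * sqrt (real d) + r \<or>
    (\<exists>i\<in>{1..N}. \<exists>j\<in>{1..N}. \<not> \<bar>vinner d (\<lambda>l. xs i l - xs j l) w\<bar> \<le> r * vdist d (xs i) (xs j))"
    unfolding Gset_def by auto
  then show ?thesis
  proof (elim disjE bexE)
    fix i j assume "i \<in> {1..N}" "j \<in> {1..N}"
      and "\<not> \<bar>vinner d (\<lambda>l. xs i l - xs j l) w\<bar> \<le> r * vdist d (xs i) (xs j)"
    moreover from this(3) diagonal have "i \<noteq> j"
      by blast
    ultimately show ?thesis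
      by (intro disjI2 bexI[of _ "(i, j)"]) (auto simp: offdiag_def)
  qed simp
qed

lemma vnorm_restrict: "vnorm d (restrict f {..<d}) = sqrt (\<Sum>l<d. (f l)\<^sup>2)"
  by (simp add: vnorm_def)

lemma vinner_restrict: "vinner d u (restrict f {..<d}) = (\<Sum>l<d. u l * f l)"
  by (simp add: vinner_def)

text \<open>The Chernoff parameter \<open>l = 3/8\<close> for the norm makes \<open>1 / sqrt (1 - 2 l) = 2\<close>.\<close>

lemma noise_comb_notin_Gset:
  assumes p: "prob_space p" and b: "(\<Sum>s\<in>{1..T}. (b s)\<^sup>2) = 1" and r: "0 < r"
  shows "\<exists>E \<in> sets (fwd_space p d T).
    {\<omega> \<in> space (fwd_space p d T). restrict (noise_comb T b \<omega>) {..<d} \<notin> Gset d N xs r} \<subseteq> E \<and>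
    emeasure (fwd_space p d T) E \<le> ennreal (2 ^ d * exp (- (3/8) * (2 * sqrt (real d) + r)\<^sup>2)
                                      + card (offdiag N) * (2 * exp (- r\<^sup>2 / 2)))"
proof -
  let ?O = "fwd_space p d T" and ?W = "\<lambda>\<omega>. restrict (noise_comb T b \<omega>) {..<d}"
  define R where "R = 2 * sqrt (real d) + r"
  define E where "E = {\<omega> \<in> space ?O. R < vnorm d (?W \<omega>)}"
  define F where "F = (\<lambda>(i, j). {\<omega> \<in> space ?O.
    r * vdist d (xs i) (xs j) < \<bar>vinner d (\<lambda>l. xs i l - xs j l) (?W \<omega>)\<bar>})"
  have [measurable]: "E \<in> sets ?O" "F ij \<in> sets ?O" for ij
    unfolding E_def F_def by (simp_all add: vnorm_restrict vinner_restrict split: prod.split)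
  have "{\<omega> \<in> space ?O. ?W \<omega> \<notin> Gset d N xs r} \<subseteq> E \<union> (\<Union>ij\<in>offdiag N. F ij)"
  proof
    fix \<omega> assume "\<omega> \<in> {\<omega> \<in> space ?O. ?W \<omega> \<notin> Gset d N xs r}"
    then have \<omega>: "\<omega> \<in> space ?O" "?W \<omega> \<in> space (Rd d)" "?W \<omega> \<notin> Gset d N xs r"
      by (auto simp: space_Rd)
    with notin_GsetD[OF \<omega>(2,3)] show "\<omega> \<in> E \<union> (\<Union>ij\<in>offdiag N. F ij)"
      by (auto simp: E_def F_def R_def)
  qed
  moreover have "emeasure ?O (E \<union> (\<Union>ij\<in>offdiag N. F ij))
      \<le> ennreal (2 ^ d * exp (- (3/8) * R\<^sup>2) + card (offdiag N) * (2 * exp (- r\<^sup>2 / 2)))"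
  proof -
    have "emeasure ?O E \<le> ennreal (exp (- (3/8) * R\<^sup>2) * (1 / sqrt (1 - 2 * (3/8))) ^ d)"
      unfolding E_def vnorm_restrict using r by (intro noise_comb_norm_tail[OF p b]) (auto simp: R_def)
    also have "1 / sqrt (1 - 2 * (3/8)) = (2::real)"
      by (simp add: real_sqrt_divide)
    finally have "emeasure ?O E \<le> ennreal (2 ^ d * exp (- (3/8) * R\<^sup>2))"
      by (simp add: mult.commute)
    moreover have "emeasure ?O (F ij) \<le> ennreal (2 * exp (- r\<^sup>2 / 2))" for ij
      unfolding F_def vinner_restrict vdist_def vnorm_def
      by (cases ij) (simp only: prod.case, rule noise_comb_inner_tail[OF p b r])
    ultimately have "emeasure ?O E + (\<Sum>ij\<in>offdiag N. emeasure ?O (F ij))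
        \<le> ennreal (2 ^ d * exp (- (3/8) * R\<^sup>2)) + (\<Sum>ij\<in>offdiag N. ennreal (2 * exp (- r\<^sup>2 / 2)))"
      by (intro add_mono sum_mono)
    moreover have "emeasure ?O (E \<union> (\<Union>ij\<in>offdiag N. F ij))
        \<le> emeasure ?O E + (\<Sum>ij\<in>offdiag N. emeasure ?O (F ij))"
      by (intro order.trans[OF emeasure_subadditive] add_mono emeasure_subadditive_finite finite_offdiag)
        auto
    ultimately show ?thesis
      by (simp add: ennreal_of_nat_eq_real_of_nat flip: ennreal_plus ennreal_mult)
  qed
  ultimately show ?thesis
    unfolding R_def by (intro bexI[of _ "E \<union> (\<Union>ij\<in>offdiag N. F ij)"]) auto
qed

section \<open>The support of the data distribution\<close>

lemma vdist_eq_L2_set: "vdist d x y = L2_set (\<lambda>i. x i - y i) {..<d}"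
  by (simp add: vdist_def vnorm_def L2_set_def)

lemma vdist_commute: "vdist d x y = vdist d y x"
  unfolding vdist_def vnorm_def by (simp add: power2_commute)

lemma vdist_triangle: "vdist d x z \<le> vdist d x y + vdist d y z"
proof -
  have "vdist d x z = L2_set (\<lambda>i. (x i - y i) + (y i - z i)) {..<d}"
    by (simp add: vdist_eq_L2_set)
  also have "\<dots> \<le> vdist d x y + vdist d y z"
    unfolding vdist_eq_L2_set by (rule L2_set_triangle_ineq)
  finally show ?thesis .
qed

lemma measurable_vdist [measurable]: "(\<lambda>y. vdist d q y) \<in> borel_measurable (Rd d)"
proof -
  have "(\<lambda>y. y l) \<in> borel_measurable (Rd d)" if "l \<in> {..<d}" for l
    unfolding Rd_def using that by (intro measurable_component_singleton) auto
  then show ?thesis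
    unfolding vdist_def vnorm_def by measurable
qed

lemma exists_rational_vector_near:
  assumes "\<delta> > 0"
  obtains q where "q \<in> PiE {..<d} (\<lambda>_. \<rat>)" "vdist d x q < \<delta>"
proof -
  define \<epsilon> where "\<epsilon> = \<delta> / (real d + 1)"
  have \<epsilon>: "\<epsilon> > 0" "real d * \<epsilon> < \<delta>"
    using assms by (auto simp: \<epsilon>_def field_simps)
  have "\<forall>l. \<exists>r. r \<in> \<rat> \<and> \<bar>x l - r\<bar> < \<epsilon>"
  proof
    fix l
    obtain r where "r \<in> \<rat>" "x l - \<epsilon> < r" "r < x l + \<epsilon>"
      using Rats_dense_in_real[of "x l - \<epsilon>" "x l + \<epsilon>"] \<epsilon>(1) by auto
    then show "\<exists>r. r \<in> \<rat> \<and> \<bar>x l - r\<bar> < \<epsilon>"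
      by (intro exI[of _ r]) auto
  qed
  then obtain f where f: "\<And>l. f l \<in> \<rat>" "\<And>l. \<bar>x l - f l\<bar> < \<epsilon>"
    by metis
  have "vdist d x (restrict f {..<d}) \<le> (\<Sum>l<d. \<bar>x l - restrict f {..<d} l\<bar>)"
    unfolding vdist_eq_L2_set by (rule L2_set_le_sum_abs)
  also have "\<dots> \<le> (\<Sum>l<d. \<epsilon>)"
    using f(2) by (intro sum_mono) (simp add: less_imp_le)
  finally show ?thesis
    using f(1) \<epsilon>(2) by (intro that[of "restrict f {..<d}"]) auto
qed

definition vball :: "nat \<Rightarrow> (nat \<Rightarrow> real) \<Rightarrow> real \<Rightarrow> (nat \<Rightarrow> real) set" where
  "vball d q e = {y \<in> space (Rd d). vdist d q y < e}"

lemma sets_vball [measurable]: "vball d q e \<in> sets (Rd d)"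
  unfolding vball_def by measurable

lemma outside_support_obtains_null_rational_vball:
  assumes sets_p: "sets p = sets (Rd d)" and x: "x \<in> space (Rd d) - support_of d p"
  obtains q \<rho> where "q \<in> PiE {..<d} (\<lambda>_. \<rat>)" "\<rho> \<in> \<rat>" "x \<in> vball d q \<rho>"
    "emeasure p (vball d q \<rho>) = 0"
proof -
  obtain e where e: "e > 0" "emeasure p (vball d x e) = 0"
    using x unfolding support_of_def vball_def by (auto simp: not_less)
  obtain q where q: "q \<in> PiE {..<d} (\<lambda>_. \<rat>)" "vdist d x q < e / 2"
    using exists_rational_vector_near[of "e / 2"] e(1) by auto
  obtain \<rho> where \<rho>: "\<rho> \<in> \<rat>" "vdist d x q < \<rho>" "\<rho> < e / 2"
    using Rats_dense_in_real[OF q(2)] by auto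
  have "vball d q \<rho> \<subseteq> vball d x e"
  proof
    fix y assume "y \<in> vball d q \<rho>"
    moreover have "vdist d x y \<le> vdist d x q + vdist d q y"
      by (rule vdist_triangle)
    ultimately show "y \<in> vball d x e"
      using \<rho> by (auto simp: vball_def)
  qed
  then have "emeasure p (vball d q \<rho>) = 0"
    using e(2) emeasure_mono[of "vball d q \<rho>" "vball d x e" p] by (simp add: sets_p)
  moreover have "x \<in> vball d q \<rho>"
    using x \<rho> by (simp add: vball_def vdist_commute)
  ultimately show ?thesis
    using q(1) \<rho>(1) that by blast
qed

lemma support_of_complement_null:
  assumes sets_p: "sets p = sets (Rd d)"
  shows "\<exists>Z \<in> null_sets p. space (Rd d) - support_of d p \<subseteq> Z"
proof -
  define J where "J = {(q, \<rho>). q \<in> PiE {..<d} (\<lambda>_. \<rat>) \<and> \<rho> \<in> \<rat> \<and> emeasure p (vball d q \<rho>) = 0}"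
  have "countable J"
  proof (rule countable_subset)
    show "J \<subseteq> PiE {..<d} (\<lambda>_. \<rat>) \<times> \<rat>"
      by (auto simp: J_def)
    show "countable (PiE {..<d} (\<lambda>_. \<rat>) \<times> \<rat>)"
      by (intro countable_SIGMA countable_PiE) (auto simp: countable_rat)
  qed
  then have "(\<Union>(q, \<rho>)\<in>J. vball d q \<rho>) \<in> null_sets p"
  proof (rule null_sets_UN')
    fix i assume "i \<in> J"
    then show "(case i of (q, \<rho>) \<Rightarrow> vball d q \<rho>) \<in> null_sets p"
      by (cases i) (simp add: J_def null_sets_def sets_p)
  qed
  moreover have "space (Rd d) - support_of d p \<subseteq> (\<Union>(q, \<rho>)\<in>J. vball d q \<rho>)"
  proof
    fix x assume "x \<in> space (Rd d) - support_of d p"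
    with outside_support_obtains_null_rational_vball[OF sets_p] obtain q \<rho>
      where "(q, \<rho>) \<in> J" "x \<in> vball d q \<rho>"
      unfolding J_def by blast
    then show "x \<in> (\<Union>(q, \<rho>)\<in>J. vball d q \<rho>)"
      by blast
  qed
  ultimately show ?thesis
    by blast
qed

section \<open>The forward process as a Gaussian mixture\<close>

text \<open>Unrolling the recursion gives
  \<open>X\<^sub>t = sqrt (alphabar t) X\<^sub>0 + \<Sum>\<^sub>s noise_coeff alpha t s W\<^sub>s\<close>.\<close>

definition noise_coeff :: "(nat \<Rightarrow> real) \<Rightarrow> nat \<Rightarrow> nat \<Rightarrow> real" where
  "noise_coeff a t s = sqrt (1 - a s) * (\<Prod>i\<in>{Suc s..t}. sqrt (a i))"

lemma fwdX_eq_sum_noise_coeff: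
  "l < d \<Longrightarrow> fwdX c0 c1 T d \<omega> t l
     = sqrt (alphabar c0 c1 T t) * \<omega> 0 l + (\<Sum>s\<in>{1..t}. noise_coeff (alpha c0 c1 T) t s * \<omega> s l)"
proof (induction t)
  case 0
  then show ?case
    by (simp add: alphabar_def)
next
  case (Suc t)
  let ?a = "alpha c0 c1 T"
  have "(\<Sum>s\<in>{1..Suc t}. noise_coeff ?a (Suc t) s * \<omega> s l)
      = sqrt (?a (Suc t)) * (\<Sum>s\<in>{1..t}. noise_coeff ?a t s * \<omega> s l)
        + sqrt (1 - ?a (Suc t)) * \<omega> (Suc t) l"
    by (simp add: noise_coeff_def sum.nat_ivl_Suc' prod.nat_ivl_Suc' sum_distrib_left algebra_simps)
  with Suc show ?case
    by (simp add: vlin_def alphabar_def real_sqrt_mult algebra_simps)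
qed

lemma sum_noise_coeff_sq:
  assumes "\<And>i. i \<in> {1..t} \<Longrightarrow> 0 \<le> a i \<and> a i \<le> 1"
  shows "(\<Sum>s\<in>{1..t}. (noise_coeff a t s)\<^sup>2) = 1 - (\<Prod>i\<in>{1..t}. a i)"
  using assms
proof (induction t)
  case 0
  then show ?case
    by simp
next
  case (Suc t)
  have a: "0 \<le> a (Suc t)" "a (Suc t) \<le> 1"
    using Suc.prems by auto
  have "(noise_coeff a (Suc t) s)\<^sup>2 = a (Suc t) * (noise_coeff a t s)\<^sup>2" if "s \<in> {1..t}" for s
    using that a by (simp add: noise_coeff_def prod.nat_ivl_Suc' power_mult_distrib)
  then have "(\<Sum>s\<in>{1..Suc t}. (noise_coeff a (Suc t) s)\<^sup>2)
      = a (Suc t) * (\<Sum>s\<in>{1..t}. (noise_coeff a t s)\<^sup>2) + (1 - a (Suc t))"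
    using a by (simp add: sum.nat_ivl_Suc' sum_distrib_left noise_coeff_def[of _ "Suc t" "Suc t"])
  also have "\<dots> = 1 - (\<Prod>i\<in>{1..Suc t}. a i)"
  proof -
    have IH: "(\<Sum>s\<in>{1..t}. (noise_coeff a t s)\<^sup>2) = 1 - (\<Prod>i\<in>{1..t}. a i)"
      using Suc.IH Suc.prems by simp
    show ?thesis
      unfolding IH by (simp add: prod.nat_ivl_Suc' algebra_simps)
  qed
  finally show ?case .
qed

text \<open>The normalised noise coefficients are the weights of the standard Gaussian \<open>V\<^sub>t\<close> in
  \<open>X\<^sub>t = sqrt (alphabar t) X\<^sub>0 + sqrt (1 - alphabar t) V\<^sub>t\<close>.\<close>

definition mix_weight :: "(nat \<Rightarrow> real) \<Rightarrow> nat \<Rightarrow> nat \<Rightarrow> real" where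
  "mix_weight a t s =
     (if s \<in> {1..t} then noise_coeff a t s / sqrt (1 - (\<Prod>i\<in>{1..t}. a i)) else 0)"

lemma sum_if_mem_atLeastAtMost:
  fixes t T :: nat
  shows "t \<le> T \<Longrightarrow> (\<Sum>s\<in>{1..T}. if s \<in> {1..t} then f s else 0) = (\<Sum>s\<in>{1..t}. f s)"
  by (intro sum.mono_neutral_cong_right) auto

lemma sum_mix_weight_sq:
  assumes "t \<le> T" "\<And>i. i \<in> {1..t} \<Longrightarrow> 0 \<le> a i \<and> a i \<le> 1" "(\<Prod>i\<in>{1..t}. a i) < 1"
  shows "(\<Sum>s\<in>{1..T}. (mix_weight a t s)\<^sup>2) = 1"
proof -
  have "(\<Sum>s\<in>{1..T}. (mix_weight a t s)\<^sup>2)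
      = (\<Sum>s\<in>{1..T}. if s \<in> {1..t} then (noise_coeff a t s)\<^sup>2 / (1 - (\<Prod>i\<in>{1..t}. a i)) else 0)"
    using assms(3) by (intro sum.cong) (auto simp: mix_weight_def power_divide)
  also have "\<dots> = (\<Sum>s\<in>{1..t}. (noise_coeff a t s)\<^sup>2) / (1 - (\<Prod>i\<in>{1..t}. a i))"
    by (simp only: sum_if_mem_atLeastAtMost[OF assms(1)] sum_divide_distrib)
  finally show ?thesis
    using sum_noise_coeff_sq[OF assms(2)] assms(3) by simp
qed

lemma fwdX_eq_vlin_noise_comb:
  assumes "1 \<le> t" "t \<le> T" "alphabar c0 c1 T t < 1"
  shows "fwdX c0 c1 T d \<omega> t
     = vlin d (sqrt (alphabar c0 c1 T t)) (\<omega> 0) (sqrt (1 - alphabar c0 c1 T t))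
         (restrict (noise_comb T (mix_weight (alpha c0 c1 T) t) \<omega>) {..<d})"
    (is "_ = ?rhs")
proof
  fix l
  show "fwdX c0 c1 T d \<omega> t l = ?rhs l"
  proof (cases "l < d")
    case True
    have "noise_comb T (mix_weight (alpha c0 c1 T) t) \<omega> l = (\<Sum>s\<in>{1..T}. if s \<in> {1..t}
        then noise_coeff (alpha c0 c1 T) t s * \<omega> s l / sqrt (1 - alphabar c0 c1 T t) else 0)"
      unfolding noise_comb_def by (intro sum.cong) (auto simp: mix_weight_def alphabar_def)
    also have "\<dots> = (\<Sum>s\<in>{1..t}. noise_coeff (alpha c0 c1 T) t s * \<omega> s l)
        / sqrt (1 - alphabar c0 c1 T t)"
      by (simp only: sum_if_mem_atLeastAtMost[OF assms(2)] sum_divide_distrib)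
    finally show ?thesis
      using True assms(3) by (simp add: fwdX_eq_sum_noise_coeff vlin_def)
  next
    case False
    obtain t' where "t = Suc t'"
      using assms(1) by (cases t) auto
    with False show ?thesis
      by (simp add: vlin_def)
  qed
qed

lemma fwdX_recover_noise:
  assumes "1 \<le> t" "alpha c0 c1 T t < 1" "\<omega> t \<in> space (Rd d)"
  shows "vlin d (1 / sqrt (1 - alpha c0 c1 T t)) (fwdX c0 c1 T d \<omega> t)
           (- sqrt (alpha c0 c1 T t) / sqrt (1 - alpha c0 c1 T t)) (fwdX c0 c1 T d \<omega> (t - 1))
         = \<omega> t"
proof
  fix l
  obtain t' where "t = Suc t'"
    using assms(1) by (cases t) auto
  then show "vlin d (1 / sqrt (1 - alpha c0 c1 T t)) (fwdX c0 c1 T d \<omega> t)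
      (- sqrt (alpha c0 c1 T t) / sqrt (1 - alpha c0 c1 T t)) (fwdX c0 c1 T d \<omega> (t - 1)) l = \<omega> t l"
    using assms(2,3) by (auto simp: vlin_def field_simps space_Rd PiE_iff extensional_def)
qed

lemma restrict_noise_comb_unit_weight:
  assumes "\<omega> \<in> space (fwd_space p d T)" "t \<in> {1..T}"
  shows "restrict (noise_comb T (\<lambda>s. if s = t then 1 else 0) \<omega>) {..<d} = \<omega> t"
proof -
  have "\<omega> t \<in> space (Rd d)"
    using fwd_space_component_in_space[OF assms(1), of t] assms(2) by (simp add: space_std_gauss)
  then show ?thesis
    using assms(2)
    by (auto simp: noise_comb_def of_bool_def[symmetric] space_Rd PiE_iff extensional_def)
qed

lemma sum_unit_weight_sq:
  fixes t T :: nat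
  shows "t \<in> {1..T} \<Longrightarrow> (\<Sum>s\<in>{1..T}. (if s = t then 1 else 0)\<^sup>2) = (1 :: real)"
  by (simp add: if_distrib[of "\<lambda>y. y\<^sup>2"] cong: if_cong)

lemma fwdX_pair_notin_AsetD:
  assumes \<omega>: "\<omega> \<in> space (fwd_space p d T)" and t: "1 \<le> t" "t \<le> T"
    and "alpha c0 c1 T t < 1" "alphabar c0 c1 T t < 1"
    and "(fwdX c0 c1 T d \<omega> t, fwdX c0 c1 T d \<omega> (t - 1))
           \<notin> Aset d (alpha c0 c1 T t) (Tset d (alphabar c0 c1 T t) U G) G"
  shows "\<omega> 0 \<notin> U \<or> restrict (noise_comb T (mix_weight (alpha c0 c1 T) t) \<omega>) {..<d} \<notin> G
    \<or> restrict (noise_comb T (\<lambda>s. if s = t then 1 else 0) \<omega>) {..<d} \<notin> G"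
proof (rule ccontr)
  assume "\<not> ?thesis"
  then have "\<omega> 0 \<in> U" "restrict (noise_comb T (mix_weight (alpha c0 c1 T) t) \<omega>) {..<d} \<in> G"
    "\<omega> t \<in> G"
    using restrict_noise_comb_unit_weight[OF \<omega>] t by auto
  then have "fwdX c0 c1 T d \<omega> t \<in> Tset d (alphabar c0 c1 T t) U G"
    unfolding Tset_def using fwdX_eq_vlin_noise_comb[OF t assms(5)] by blast
  moreover have "\<omega> t \<in> space (Rd d)"
    using fwd_space_component_in_space[OF \<omega>, of t] t by (simp add: space_std_gauss)
  ultimately have "(fwdX c0 c1 T d \<omega> t, fwdX c0 c1 T d \<omega> (t - 1))
      \<in> Aset d (alpha c0 c1 T t) (Tset d (alphabar c0 c1 T t) U G) G"
    using fwdX_recover_noise[where \<omega> = \<omega>, OF t(1) assms(4)] \<open>\<omega> t \<in> G\<close> unfolding Aset_def by simp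
  with assms(6) show False
    by contradiction
qed

lemma beta_pos:
  assumes "T \<ge> 2" "c1 > 0"
  shows "beta c0 c1 T s > 0"
proof -
  have T: "real T > 1" "ln (real T) > 0"
    using assms(1) by auto
  then have step: "c1 * ln (real T) / real T > 0"
    using assms(2) by simp
  then have "(1 + c1 * ln (real T) / real T) ^ (s - 1) > 0"
    by simp
  then have "min (real T powr - c0 * (1 + c1 * ln (real T) / real T) ^ (s - 1)) 1 > 0"
    using T by simp
  with step T show ?thesis
    unfolding beta_def by (simp only: if_split) (intro conjI impI mult_pos_pos; simp)
qed

lemma prod_atLeastAtMost_less_1:
  fixes a :: "nat \<Rightarrow> real"
  assumes "\<And>i. i \<in> {1..t} \<Longrightarrow> 0 \<le> a i \<and> a i \<le> 1" "a 1 < 1" "1 \<le> t"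
  shows "(\<Prod>i\<in>{1..t}. a i) < 1"
proof -
  have "{1..t} = insert 1 {2..t}"
    using assms(3) by auto
  then have "(\<Prod>i\<in>{1..t}. a i) = a 1 * (\<Prod>i\<in>{2..t}. a i)"
    by simp
  also have "\<dots> \<le> a 1"
    using assms(1,3) by (intro mult_left_le prod_le_1 prod_nonneg) auto
  finally show ?thesis
    using assms(2) by simp
qed

lemma alpha_bounds:
  assumes "T \<ge> 2" "c1 > 0" "\<forall>s\<in>{1..T}. beta c0 c1 T s \<le> 1" "s \<in> {1..T}"
  shows "0 \<le> alpha c0 c1 T s" "alpha c0 c1 T s < 1"
  using assms beta_pos[OF assms(1,2), of c0 s] by (auto simp: alpha_def)

lemma alphabar_less_1:
  assumes "T \<ge> 2" "c1 > 0" "\<forall>s\<in>{1..T}. beta c0 c1 T s \<le> 1" "1 \<le> t" "t \<le> T"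
  shows "alphabar c0 c1 T t < 1"
  unfolding alphabar_def
proof (rule prod_atLeastAtMost_less_1)
  show "0 \<le> alpha c0 c1 T i \<and> alpha c0 c1 T i \<le> 1" if "i \<in> {1..t}" for i
    using that assms(5) alpha_bounds[OF assms(1-3), of i] by auto
  show "alpha c0 c1 T 1 < 1"
    using assms(4,5) alpha_bounds[OF assms(1-3), of 1] by auto
qed (rule assms(4))

lemma sum_mix_weight_alpha_sq:
  assumes "T \<ge> 2" "c1 > 0" "\<forall>s\<in>{1..T}. beta c0 c1 T s \<le> 1" "1 \<le> t" "t \<le> T"
  shows "(\<Sum>s\<in>{1..T}. (mix_weight (alpha c0 c1 T) t s)\<^sup>2) = 1"
proof -
  have "0 \<le> alpha c0 c1 T i \<and> alpha c0 c1 T i \<le> 1" if "i \<in> {1..t}" for i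
    using alpha_bounds[OF assms(1-3), of i] that assms(5) by auto
  with sum_mix_weight_sq[OF assms(5)] alphabar_less_1[OF assms] show ?thesis
    unfolding alphabar_def by blast
qed

section \<open>Mass of the light cells\<close>

lemma cells_cover_almost_everywhere:
  fixes N :: nat
  assumes sets_p: "sets p = sets (Rd d)" and cover: "support_of d p \<subseteq> (\<Union>i\<in>{1..N}. B i)"
  obtains Z where "Z \<in> null_sets p" "space p - (\<Union>i\<in>{1..N}. B i) \<subseteq> Z"
proof -
  obtain Z where "Z \<in> null_sets p" "space (Rd d) - support_of d p \<subseteq> Z"
    using support_of_complement_null[OF sets_p] by blast
  moreover have "space p = space (Rd d)"
    using sets_p by (rule sets_eq_imp_space_eq)
  ultimately show ?thesis
    using cover by (intro that[of Z]) auto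
qed

lemma emeasure_outside_heavy_cells:
  fixes N :: nat and \<theta> :: real
  assumes "prob_space p" and sets_p: "sets p = sets (Rd d)"
    and cover: "support_of d p \<subseteq> (\<Union>i\<in>{1..N}. B i)" and B: "\<forall>i\<in>{1..N}. B i \<in> sets p"
    and "0 \<le> \<theta>"
  shows "emeasure p (space p - (\<Union>i\<in>{i \<in> {1..N}. \<theta> \<le> measure p (B i)}. B i))
           \<le> ennreal (real (card {i \<in> {1..N}. measure p (B i) < \<theta>}) * \<theta>)"
proof -
  interpret prob_space p by fact
  let ?light = "{i \<in> {1..N}. measure p (B i) < \<theta>}"
  have light: "finite ?light"
    by (rule finite_subset[of _ "{1..N}"]) auto
  obtain Z where Z: "Z \<in> null_sets p" "space p - (\<Union>i\<in>{1..N}. B i) \<subseteq> Z"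
    using cells_cover_almost_everywhere[OF sets_p cover] by blast
  have "{1..N} = {i \<in> {1..N}. \<theta> \<le> measure p (B i)} \<union> ?light"
    by auto
  then have "(\<Union>i\<in>{1..N}. B i) = (\<Union>i\<in>{i \<in> {1..N}. \<theta> \<le> measure p (B i)}. B i) \<union> (\<Union>i\<in>?light. B i)"
    by (metis UN_Un)
  with Z(2) have "space p - (\<Union>i\<in>{i \<in> {1..N}. \<theta> \<le> measure p (B i)}. B i) \<subseteq> Z \<union> (\<Union>i\<in>?light. B i)"
    by blast
  then have "emeasure p (space p - (\<Union>i\<in>{i \<in> {1..N}. \<theta> \<le> measure p (B i)}. B i))
      \<le> emeasure p (Z \<union> (\<Union>i\<in>?light. B i))"
    using Z(1) B light by (intro emeasure_mono sets.Un sets.finite_UN) auto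
  also have "\<dots> \<le> emeasure p Z + emeasure p (\<Union>i\<in>?light. B i)"
    using Z(1) B light by (intro emeasure_subadditive sets.finite_UN) auto
  also have "\<dots> = emeasure p (\<Union>i\<in>?light. B i)"
    using Z(1) by (simp add: null_setsD1)
  also have "\<dots> \<le> (\<Sum>i\<in>?light. emeasure p (B i))"
    using B light by (intro emeasure_subadditive_finite) auto
  also have "\<dots> \<le> (\<Sum>i\<in>?light. ennreal \<theta>)"
    by (intro sum_mono) (simp add: emeasure_eq_measure ennreal_leI)
  finally show ?thesis
    using \<open>0 \<le> \<theta>\<close> by (simp add: ennreal_of_nat_eq_real_of_nat flip: ennreal_mult)
qed

lemma no_light_cells_if_single:
  fixes N :: nat and \<theta> :: real
  assumes "prob_space p" and sets_p: "sets p = sets (Rd d)"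
    and cover: "support_of d p \<subseteq> (\<Union>i\<in>{1..N}. B i)" and B: "\<forall>i\<in>{1..N}. B i \<in> sets p"
    and "N \<le> 1" "\<theta> \<le> 1"
  shows "{i \<in> {1..N}. measure p (B i) < \<theta>} = {}"
proof (cases "N = 1")
  case True
  interpret prob_space p by fact
  obtain Z where Z: "Z \<in> null_sets p" "space p - B 1 \<subseteq> Z"
    using cells_cover_almost_everywhere[OF sets_p cover] True by auto
  have "1 = emeasure p (space p)"
    by (rule emeasure_space_1[symmetric])
  also have "\<dots> \<le> emeasure p (Z \<union> B 1)"
    using Z B True by (intro emeasure_mono) auto
  also have "\<dots> \<le> emeasure p Z + emeasure p (B 1)"
    using Z B True by (intro emeasure_subadditive) auto
  also have "\<dots> = emeasure p (B 1)"
    using Z(1) by (simp add: null_setsD1)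
  finally have "1 \<le> measure p (B 1)"
    by (simp add: emeasure_eq_measure)
  with True \<open>\<theta> \<le> 1\<close> show ?thesis
    by auto
qed (use \<open>N \<le> 1\<close> in auto)

lemma fwd_space_initial_outside_heavy_cells:
  fixes N :: nat and \<theta> :: real and p :: "(nat \<Rightarrow> real) measure" and d T :: nat
    and B :: "nat \<Rightarrow> (nat \<Rightarrow> real) set"
  assumes p: "prob_space p" and sets_p: "sets p = sets (Rd d)"
    and cover: "support_of d p \<subseteq> (\<Union>i\<in>{1..N}. B i)" and B: "\<forall>i\<in>{1..N}. B i \<in> sets p"
    and "0 \<le> \<theta>"
  defines "E \<equiv> {\<omega> \<in> space (fwd_space p d T). \<omega> 0 \<notin> (\<Union>i\<in>{i \<in> {1..N}. \<theta> \<le> measure p (B i)}. B i)}"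
  shows "E \<in> sets (fwd_space p d T)"
    and "emeasure (fwd_space p d T) E \<le> ennreal (real (card {i \<in> {1..N}. measure p (B i) < \<theta>}) * \<theta>)"
proof -
  have A: "space p - (\<Union>i\<in>{i \<in> {1..N}. \<theta> \<le> measure p (B i)}. B i) \<in> sets p"
    using B by auto
  have E: "E = {\<omega> \<in> space (fwd_space p d T).
      \<omega> 0 \<in> space p - (\<Union>i\<in>{i \<in> {1..N}. \<theta> \<le> measure p (B i)}. B i)}"
    using fwd_space_component_in_space[where s = 0] by (auto simp: E_def)
  have "(\<lambda>\<omega>. \<omega> 0) \<in> measurable (fwd_space p d T) p"
    using measurable_fwd_space_component[of 0 T p d] by simp
  from measurable_sets[OF this A] show "E \<in> sets (fwd_space p d T)"
    by (simp add: E vimage_def Int_def conj_commute)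
  show "emeasure (fwd_space p d T) E \<le> ennreal (real (card {i \<in> {1..N}. measure p (B i) < \<theta>}) * \<theta>)"
    unfolding E emeasure_fwd_space_initial[OF p A]
    by (rule emeasure_outside_heavy_cells) fact+
qed

lemma forward_pair_notin_Aset_union_bound:
  fixes p :: "(nat \<Rightarrow> real) measure" and d T N t :: nat and \<theta> r :: real
    and B :: "nat \<Rightarrow> (nat \<Rightarrow> real) set"
  assumes c1: "c1 > 0" and T: "T \<ge> 2" and beta: "\<forall>s\<in>{1..T}. beta c0 c1 T s \<le> 1"
    and p: "prob_space p" and sets_p: "sets p = sets (Rd d)"
    and cover: "support_of d p \<subseteq> (\<Union>i\<in>{1..N}. B i)" and B: "\<forall>i\<in>{1..N}. B i \<in> sets (Rd d)"
    and t: "1 \<le> t" "t \<le> T" and \<theta>: "0 \<le> \<theta>" and r: "0 < r"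
  shows "\<exists>E\<in>sets (fwd_space p d T).
    {\<omega> \<in> space (fwd_space p d T). (fwdX c0 c1 T d \<omega> t, fwdX c0 c1 T d \<omega> (t - 1)) \<notin>
       Aset d (alpha c0 c1 T t)
         (Tset d (alphabar c0 c1 T t) (\<Union>i\<in>{i \<in> {1..N}. measure p (B i) \<ge> \<theta>}. B i) (Gset d N xs r))
         (Gset d N xs r)} \<subseteq> E \<and>
    measure (fwd_space p d T) E \<le> real (card {i \<in> {1..N}. measure p (B i) < \<theta>}) * \<theta>
       + 2 * (2 ^ d * exp (- (3/8) * (2 * sqrt (real d) + r)\<^sup>2) + card (offdiag N) * (2 * exp (- r\<^sup>2 / 2)))"
proof -
  let ?O = "fwd_space p d T"
  interpret O: prob_space ?O
    by (rule prob_space_fwd_space[OF p])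
  define U where "U = (\<Union>i\<in>{i \<in> {1..N}. measure p (B i) \<ge> \<theta>}. B i)"
  define G where "G = Gset d N xs r"
  have B': "\<forall>i\<in>{1..N}. B i \<in> sets p"
    using B sets_p by simp
  have tT: "t \<in> {1..T}"
    using t by simp
  have alphabar: "alphabar c0 c1 T t < 1" and alpha: "alpha c0 c1 T t < 1"
    using alphabar_less_1[OF T c1 beta t] alpha_bounds[OF T c1 beta tT] by auto
  define E\<^sub>0 where "E\<^sub>0 = {\<omega> \<in> space ?O. \<omega> 0 \<notin> U}"
  note E\<^sub>0 = fwd_space_initial_outside_heavy_cells[OF p sets_p cover B' \<theta>, of T, folded U_def E\<^sub>0_def]
  obtain E\<^sub>1 where E\<^sub>1: "E\<^sub>1 \<in> sets ?O"
    "{\<omega> \<in> space ?O. restrict (noise_comb T (mix_weight (alpha c0 c1 T) t) \<omega>) {..<d} \<notin> G} \<subseteq> E\<^sub>1"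
    "emeasure ?O E\<^sub>1 \<le> ennreal (2 ^ d * exp (- (3/8) * (2 * sqrt (real d) + r)\<^sup>2)
       + card (offdiag N) * (2 * exp (- r\<^sup>2 / 2)))"
    using noise_comb_notin_Gset[OF p sum_mix_weight_alpha_sq[OF T c1 beta t] r,
        where d = d and N = N and xs = xs]
    unfolding G_def by blast
  obtain E\<^sub>2 where E\<^sub>2: "E\<^sub>2 \<in> sets ?O"
    "{\<omega> \<in> space ?O. restrict (noise_comb T (\<lambda>s. if s = t then 1 else 0) \<omega>) {..<d} \<notin> G} \<subseteq> E\<^sub>2"
    "emeasure ?O E\<^sub>2 \<le> ennreal (2 ^ d * exp (- (3/8) * (2 * sqrt (real d) + r)\<^sup>2)
       + card (offdiag N) * (2 * exp (- r\<^sup>2 / 2)))"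
    using noise_comb_notin_Gset[OF p sum_unit_weight_sq[OF tT] r, where d = d and N = N and xs = xs]
    unfolding G_def by blast
  have "{\<omega> \<in> space ?O. (fwdX c0 c1 T d \<omega> t, fwdX c0 c1 T d \<omega> (t - 1))
      \<notin> Aset d (alpha c0 c1 T t) (Tset d (alphabar c0 c1 T t) U G) G} \<subseteq> E\<^sub>0 \<union> E\<^sub>1 \<union> E\<^sub>2"
  proof
    fix \<omega> assume "\<omega> \<in> {\<omega> \<in> space ?O. (fwdX c0 c1 T d \<omega> t, fwdX c0 c1 T d \<omega> (t - 1))
      \<notin> Aset d (alpha c0 c1 T t) (Tset d (alphabar c0 c1 T t) U G) G}"
    then have \<omega>: "\<omega> \<in> space ?O" and notA: "(fwdX c0 c1 T d \<omega> t, fwdX c0 c1 T d \<omega> (t - 1))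
      \<notin> Aset d (alpha c0 c1 T t) (Tset d (alphabar c0 c1 T t) U G) G"
      by auto
    from fwdX_pair_notin_AsetD[OF \<omega> t alpha alphabar notA] \<omega> E\<^sub>1(2) E\<^sub>2(2)
    show "\<omega> \<in> E\<^sub>0 \<union> E\<^sub>1 \<union> E\<^sub>2"
      unfolding E\<^sub>0_def by blast
  qed
  moreover have "emeasure ?O (E\<^sub>0 \<union> E\<^sub>1 \<union> E\<^sub>2) \<le> emeasure ?O E\<^sub>0 + emeasure ?O E\<^sub>1 + emeasure ?O E\<^sub>2"
    using E\<^sub>0(1) E\<^sub>1(1) E\<^sub>2(1)
    by (intro order.trans[OF emeasure_subadditive] add_mono emeasure_subadditive) auto
  ultimately show ?thesis
    using E\<^sub>0 E\<^sub>1 E\<^sub>2 add_mono[OF add_mono[OF E\<^sub>0(2) E\<^sub>1(3)] E\<^sub>2(3)] \<theta>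
    unfolding U_def G_def
    by (intro bexI[of _ "E\<^sub>0 \<union> E\<^sub>1 \<union> E\<^sub>2"] conjI)
      (auto simp: ac_simps O.emeasure_eq_measure simp flip: ennreal_plus)
qed

lemma four_le_exp_three_halves: "4 \<le> exp (3/2 :: real)"
proof -
  have "1 + 3/4 + (3/4)\<^sup>2 / 2 \<le> exp (3/4 :: real)"
    by (rule exp_lower_Taylor_quadratic) simp
  then have "2 * 2 \<le> exp (3/4 :: real) * exp (3/4)"
    by (intro mult_mono) (auto simp: power2_eq_square)
  then show ?thesis
    by (simp add: mult_exp_exp)
qed

lemma gauss_norm_term_le:
  assumes "x > 0" "d \<ge> 1"
  shows "2 * (2 ^ d * exp (- (3/8) * (2 * sqrt (real d) + sqrt x)\<^sup>2)) \<le> exp (- (3/8) * x)"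
proof -
  have "(2 * sqrt (real d) + sqrt x)\<^sup>2 = 4 * (sqrt (real d))\<^sup>2 + 4 * sqrt (real d) * sqrt x + (sqrt x)\<^sup>2"
    by (simp add: power2_eq_square algebra_simps)
  then have "4 * real d + x \<le> (2 * sqrt (real d) + sqrt x)\<^sup>2"
    using assms(1) by simp
  then have "exp (- (3/8) * (2 * sqrt (real d) + sqrt x)\<^sup>2) \<le> exp (- (3/8) * (4 * real d + x))"
    by simp
  also have "\<dots> = exp (- (3/2)) ^ d * exp (- (3/8) * x)"
    by (simp add: algebra_simps flip: exp_add exp_of_nat_mult)
  finally have "2 * (2 ^ d * exp (- (3/8) * (2 * sqrt (real d) + sqrt x)\<^sup>2))
      \<le> 2 * (2 * exp (- (3/2))) ^ d * exp (- (3/8) * x)"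
    by (simp add: power_mult_distrib)
  also have "\<dots> \<le> 2 * (1/2) * exp (- (3/8) * x)"
  proof -
    have "2 * exp (- (3/2 :: real)) \<le> 1/2"
      using four_le_exp_three_halves by (simp add: exp_minus field_simps)
    then have "(2 * exp (- (3/2 :: real))) ^ d \<le> (1/2) ^ d"
      by (intro power_mono) auto
    also have "(1/2 :: real) ^ d \<le> 1/2"
      using assms(2) power_decreasing[of 1 d "1/2 :: real"] by simp
    finally show ?thesis
      by simp
  qed
  finally show ?thesis
    by simp
qed

lemma light_and_pair_terms_le:
  fixes x :: real and m N P :: nat
  assumes x: "x > 0" and m: "m \<le> N" and P: "P \<le> N * N"
    and N: "N \<ge> 2" "32 * ln (real N) \<le> x"
  shows "real m * exp (- x) \<le> exp (- (3/8) * x)"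
    and "real P * (2 * exp (- (sqrt x)\<^sup>2 / 2)) \<le> 2 * exp (- (3/8) * x)"
    and "6 * exp (- (3/8) * x) \<le> exp (- x / 4)"
proof -
  have "real N = exp (ln (real N))"
    using N(1) by simp
  also have "\<dots> \<le> exp (x / 32)"
    using N(2) by simp
  finally have N_le: "real N \<le> exp (x / 32)" .
  have "real m * exp (- x) \<le> exp (x / 32) * exp (- x)"
    using m N_le by (intro mult_right_mono) auto
  also have "\<dots> \<le> exp (- (3/8) * x)"
    using x by (simp add: mult_exp_exp)
  finally show "real m * exp (- x) \<le> exp (- (3/8) * x)" .
  have "real P \<le> real N * real N"
    using P by (metis of_nat_le_iff of_nat_mult)
  also have "\<dots> \<le> exp (x / 32) * exp (x / 32)"
    using N_le by (intro mult_mono) auto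
  finally have "real P * (2 * exp (- (sqrt x)\<^sup>2 / 2)) \<le> exp (x / 32) * exp (x / 32) * (2 * exp (- x / 2))"
    using x by (simp add: mult_right_mono)
  also have "\<dots> \<le> 2 * exp (- (3/8) * x)"
    using x by (simp add: mult_exp_exp)
  finally show "real P * (2 * exp (- (sqrt x)\<^sup>2 / 2)) \<le> 2 * exp (- (3/8) * x)" .
  have "ln 2 \<le> ln (real N)"
    using N(1) by simp
  then have "exp (4 * ln (2 :: real)) \<le> exp (x / 8)"
    using N(2) by simp
  moreover have "exp (4 * ln (2 :: real)) = 16"
    by (simp add: exp_of_nat_mult[of 4, simplified])
  ultimately have "6 * exp (- (3/8) * x) \<le> exp (x / 8) * exp (- (3/8) * x)"
    by (intro mult_right_mono) auto
  then show "6 * exp (- (3/8) * x) \<le> exp (- x / 4)"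
    by (simp add: mult_exp_exp)
qed

lemma tail_sum_le:
  fixes x :: real and d m N P :: nat
  assumes x: "x > 0" and d: "d \<ge> 1" and m: "m \<le> N" and P: "P \<le> N * N"
    and single: "N \<le> 1 \<Longrightarrow> m = 0 \<and> P = 0"
    and many: "N \<ge> 2 \<Longrightarrow> 32 * ln (real N) \<le> x"
  shows "real m * exp (- x) + 2 * (2 ^ d * exp (- (3/8) * (2 * sqrt (real d) + sqrt x)\<^sup>2)
           + real P * (2 * exp (- (sqrt x)\<^sup>2 / 2))) \<le> exp (- x / 4)"
proof (cases "N \<le> 1")
  case True
  then have "real m * exp (- x) + 2 * (2 ^ d * exp (- (3/8) * (2 * sqrt (real d) + sqrt x)\<^sup>2)
      + real P * (2 * exp (- (sqrt x)\<^sup>2 / 2)))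
      = 2 * (2 ^ d * exp (- (3/8) * (2 * sqrt (real d) + sqrt x)\<^sup>2))"
    using single by simp
  also have "\<dots> \<le> exp (- (3/8) * x)"
    by (rule gauss_norm_term_le[OF x d])
  also have "\<dots> \<le> exp (- x / 4)"
    using x by simp
  finally show ?thesis .
next
  case False
  then have "N \<ge> 2"
    by simp
  with light_and_pair_terms_le[OF x m P this many] gauss_norm_term_le[OF x d] show ?thesis
    by simp
qed

lemma forward_pair_notin_Aset_prob:
  fixes c0 c1 C1 Ccover k :: real and p :: "(nat \<Rightarrow> real) measure" and d T N t :: nat
    and xs :: "nat \<Rightarrow> nat \<Rightarrow> real" and B :: "nat \<Rightarrow> (nat \<Rightarrow> real) set"
  assumes c1: "c1 > 0" and Ccover: "Ccover > 0" and C1: "C1 \<ge> 32 * Ccover"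
    and d: "d \<ge> 1" and T: "T \<ge> 2" and p: "prob_space p" and sets_p: "sets p = sets (Rd d)"
    and beta: "\<forall>s\<in>{1..T}. beta c0 c1 T s \<le> 1" and k: "k > 0"
    and N: "ln (real N) \<le> Ccover * k * ln (real T)"
    and cover: "support_of d p \<subseteq> (\<Union>i\<in>{1..N}. B i)"
    and B: "\<forall>i\<in>{1..N}. B i \<in> sets (Rd d)"
    and t: "1 \<le> t" "t \<le> T"
  shows "\<exists>E\<in>sets (fwd_space p d T).
    {\<omega> \<in> space (fwd_space p d T). (fwdX c0 c1 T d \<omega> t, fwdX c0 c1 T d \<omega> (t - 1)) \<notin>
       Aset d (alpha c0 c1 T t)
         (Tset d (alphabar c0 c1 T t)
            (\<Union>i\<in>{i \<in> {1..N}. measure p (B i) \<ge> exp (- C1 * k * ln (real T))}. B i)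
            (Gset d N xs (sqrt (C1 * k * ln (real T)))))
         (Gset d N xs (sqrt (C1 * k * ln (real T))))} \<subseteq> E \<and>
    measure (fwd_space p d T) E \<le> exp (- (C1 / 4) * k * ln (real T))"
proof -
  define x where "x = C1 * k * ln (real T)"
  define m where "m = card {i \<in> {1..N}. measure p (B i) < exp (- x)}"
  have kT: "k * ln (real T) > 0"
    using k T by simp
  have x: "x > 0" "32 * ln (real N) \<le> x"
  proof -
    show "x > 0"
      using Ccover C1 kT by (simp add: x_def mult.assoc)
    have "32 * ln (real N) \<le> (32 * Ccover) * (k * ln (real T))"
      using N by simp
    also have "\<dots> \<le> C1 * (k * ln (real T))"
      using C1 kT by (intro mult_right_mono) auto
    finally show "32 * ln (real N) \<le> x"
      by (simp add: x_def mult.assoc)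
  qed
  have "m \<le> card {1..N}"
    unfolding m_def by (intro card_mono) auto
  then have tail: "real m * exp (- x) + 2 * (2 ^ d * exp (- (3/8) * (2 * sqrt (real d) + sqrt x)\<^sup>2)
      + card (offdiag N) * (2 * exp (- (sqrt x)\<^sup>2 / 2))) \<le> exp (- x / 4)"
    using no_light_cells_if_single[OF p sets_p cover, of "exp (- x)"] B sets_p x d card_offdiag_le[of N]
    by (intro tail_sum_le) (auto simp: m_def offdiag_eq_empty)
  have "exp (- C1 * k * ln (real T)) = exp (- x)" "sqrt (C1 * k * ln (real T)) = sqrt x"
    "exp (- (C1 / 4) * k * ln (real T)) = exp (- x / 4)"
    by (simp_all add: x_def)
  then show ?thesis
    using forward_pair_notin_Aset_union_bound[OF c1 T beta p sets_p cover B t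
        exp_ge_zero[of "- x"] real_sqrt_gt_zero[OF x(1)]] tail
    unfolding m_def by (simp only:) (meson order.trans)
qed

theorem lemma1:
  shows "\<forall>cR>0. \<exists>c0min c1min cepsmin K. \<forall>c0 c1 ceps Ccover C1.
    c0 \<ge> c0min \<and> c1 \<ge> c1min \<and> ceps \<ge> cepsmin \<and> Ccover > 0 \<and> C1 \<ge> K * Ccover \<longrightarrow>
    (\<forall>(p :: (nat \<Rightarrow> real) measure) (d :: nat) (T :: nat) (k :: real) (N :: nat)
        (xs :: nat \<Rightarrow> nat \<Rightarrow> real) (B :: nat \<Rightarrow> (nat \<Rightarrow> real) set) (t :: nat).
      let \<X> = support_of d p;
          eps = real T powr (- ceps);
          r = sqrt (C1 * k * ln (real T));
          I = {i \<in> {1..N}. measure p (B i) \<ge> exp (- C1 * k * ln (real T))};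
          G = Gset d N xs r;
          TT = Tset d (alphabar c0 c1 T t) (\<Union>i\<in>I. B i) G;
          A = Aset d (alpha c0 c1 T t) TT G;
          \<Omega> = fwd_space p d T
      in
      d \<ge> 1 \<and> T \<ge> 2 \<and> prob_space p \<and> sets p = sets (Rd d) \<and>
      (\<forall>s\<in>{1..T}. beta c0 c1 T s \<le> 1) \<and>
      (\<forall>x\<in>\<X>. vnorm d x \<le> real T powr cR) \<and>
      k > 0 \<and> N = covering_number d \<X> eps \<and>
      ln (real N) \<le> Ccover * k * ln (real T) \<and>
      inj_on xs {1..N} \<and> is_eps_net d \<X> (xs ` {1..N}) eps \<and>
      (\<forall>i\<in>{1..N}. B i \<in> sets (Rd d) \<and> xs i \<in> B i \<and>
                    B i \<subseteq> {y \<in> space (Rd d). vdist d (xs i) y \<le> eps}) \<and>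
      (\<forall>i\<in>{1..N}. \<forall>j\<in>{1..N}. i \<noteq> j \<longrightarrow> B i \<inter> B j = {}) \<and>
      \<X> \<subseteq> (\<Union>i\<in>{1..N}. B i) \<and>
      1 \<le> t \<and> t \<le> T
      \<longrightarrow>
      (\<exists>E\<in>sets \<Omega>.
         {\<omega> \<in> space \<Omega>. (fwdX c0 c1 T d \<omega> t, fwdX c0 c1 T d \<omega> (t - 1)) \<notin> A} \<subseteq> E \<and>
         measure \<Omega> E \<le> exp (- (C1 / 4) * k * ln (real T))))"
  unfolding Let_def
  by (intro allI impI exI[of _ "32 :: real"], elim conjE, rule forward_pair_notin_Aset_prob)
    simp_all

end
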